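(* Let $f:\mathbb R^n\to\mathbb R$ be an integrable log-concave function with full-dimensional support. Then for any $\theta\in[0,1]$ and any $t\in(0,1]$, $$\mathcal A_t(f)(0)+_\theta\big(-\mathcal A_t(f)(0)\big)\subseteq\mathcal C_{\theta,t}(f)\subseteq\mathcal A_{t^2}(f)(0)+_{\frac{M_t(f)}{M_{t^2}(f)}\theta}\big(-\mathcal A_{t^2}(f)(0)\big).$$
   Context: For $t\in(0,1]$ and $x\in\mathrm{supp}\,f-\mathrm{supp}\,f$, $\mathcal A_t(f)(x)=\{z\in\mathrm{supp}\,f\cap(x+\mathrm{supp}\,f): f(z)f(z-x)\geq t\Vert f\Vert_\infty^2\}$ (so $\mathcal A_t(f)(0)=\{z:f(z)\geq\sqrt t\Vert f\Vert_\infty\}$); $M_t(f)=\max_{x_0}|\mathcal A_t(f)(x_0)|$ with $|\cdot|$ Lebesgue volume; and $\mathcal C_{\theta,t}(f)=\{x\in\mathrm{supp}\,f-\mathrm{supp}\,f:\ \mathcal A_t(f)(x)\neq\emptyset,\ |\mathcal A_t(f)(x)|\geq\theta M_t(f)\}$. For convex bodies $K,L$ and $\theta\in[0,1]$, the $\theta$-convolution body is $K+_\theta L=\{x\in K+L: |K\cap(x-L)|\geq\theta\max_{z\in\mathbb R^n}|K\cap(z-L)|\}$. *)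

theory Defs
  imports "HOL-Analysis.Analysis"
begin

definition log_concave :: "('a::euclidean_space \<Rightarrow> real) \<Rightarrow> bool" where
  "log_concave f \<longleftrightarrow> (\<forall>x. f x \<ge> 0) \<and>
     (\<forall>x y l. 0 < l \<and> l < 1 \<longrightarrow>
        f (l *\<^sub>R x + (1 - l) *\<^sub>R y) \<ge> (f x powr l) * (f y powr (1 - l)))"

definition supp :: "('a \<Rightarrow> real) \<Rightarrow> 'a set" where
  "supp f = {x. f x > 0}"

definition sup_norm :: "('a \<Rightarrow> real) \<Rightarrow> real" where
  "sup_norm f = (SUP x. f x)"

definition minkowski_sum :: "'a::ab_group_add set \<Rightarrow> 'a set \<Rightarrow> 'a set" where
  "minkowski_sum K L = {a + b | a b. a \<in> K \<and> b \<in> L}"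

definition diff_set :: "'a::ab_group_add set \<Rightarrow> 'a set \<Rightarrow> 'a set" where
  "diff_set K L = {a - b | a b. a \<in> K \<and> b \<in> L}"

definition At :: "real \<Rightarrow> ('a::euclidean_space \<Rightarrow> real) \<Rightarrow> 'a \<Rightarrow> 'a set" where
  "At t f x = {z. z \<in> supp f \<and> z \<in> (\<lambda>y. x + y) ` supp f \<and>
                  f z * f (z - x) \<ge> t * (sup_norm f)\<^sup>2}"

definition Mt :: "real \<Rightarrow> ('a::euclidean_space \<Rightarrow> real) \<Rightarrow> real" where
  "Mt t f = (SUP x0 \<in> diff_set (supp f) (supp f). measure lebesgue (At t f x0))"

definition Ct :: "real \<Rightarrow> real \<Rightarrow> ('a::euclidean_space \<Rightarrow> real) \<Rightarrow> 'a set" where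
  "Ct \<theta> t f = {x \<in> diff_set (supp f) (supp f). At t f x \<noteq> {} \<and>
                  measure lebesgue (At t f x) \<ge> \<theta> * Mt t f}"

definition conv_body :: "'a::euclidean_space set \<Rightarrow> real \<Rightarrow> 'a set \<Rightarrow> 'a set" where
  "conv_body K \<theta> L = {x \<in> minkowski_sum K L.
      measure lebesgue (K \<inter> (\<lambda>y. x - y) ` L) \<ge>
        \<theta> * (SUP z. measure lebesgue (K \<inter> (\<lambda>y. z - y) ` L))}"

end

theory Submission
  imports Defs
begin

text \<open>
  Write \<open>S\<close> for the sup-norm of \<open>f\<close> and \<open>K_t\<close> for \<open>A_t(f)(0)\<close>. Log-concavity at the
  midpoint gives \<open>f(z - x/2)^2 \<ge> f(z) f(z - x)\<close>, so \<open>A_t(f)(x)\<close> lies in a translate of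
  \<open>K_t\<close>; hence \<open>M_t(f) = |K_t|\<close>, and the supremum in the definition of
  \<open>K_t +\<^sub>\<theta> (-K_t)\<close> is \<open>|K_t|\<close>, attained at \<open>0\<close>. Moreover
  \<open>K_t \<inter> (x + K_t) \<subseteq> A_t(f)(x) \<subseteq> K_{t^2} \<inter> (x + K_{t^2})\<close>: the first because
  \<open>f(a)^2, f(b)^2 \<ge> c \<ge> 0\<close> gives \<open>f(a) f(b) \<ge> c\<close>, the second because \<open>f \<le> S\<close> forces both
  factors of \<open>f(z) f(z - x) \<ge> t S^2\<close> to be at least \<open>t S\<close>. Comparing volumes gives both
  inclusions; only \<open>0 < t\<close> is needed.

  \<open>S\<close> is finite by integrability: if \<open>E = {f \<ge> \<delta>}\<close> has positive volume, then
  \<open>f \<ge> sqrt(\<delta> f(p))\<close> on the half-size copy \<open>(E + p)/2\<close>, whose volume \<open>2^-n |E|\<close> does not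
  depend on \<open>p\<close>.
\<close>

lemma convexI_strict:
  assumes "\<And>x y u. x \<in> S \<Longrightarrow> y \<in> S \<Longrightarrow> 0 < u \<Longrightarrow> u < 1 \<Longrightarrow> u *\<^sub>R x + (1 - u) *\<^sub>R y \<in> S"
  shows "convex S"
proof (rule convexI)
  fix x y and u v :: real
  assume "x \<in> S" "y \<in> S" "0 \<le> u" "0 \<le> v" "u + v = 1"
  moreover have "v = 1 - u"
    using \<open>u + v = 1\<close> by simp
  ultimately show "u *\<^sub>R x + v *\<^sub>R y \<in> S"
    using assms[of x y u] by (cases "u = 0 \<or> v = 0") auto
qed

lemma log_concaveD_nonneg: "log_concave f \<Longrightarrow> 0 \<le> f x"
  by (simp add: log_concave_def)

lemma log_concaveD:
  "log_concave f \<Longrightarrow> 0 < l \<Longrightarrow> l < 1 \<Longrightarrow>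
    f x powr l * f y powr (1 - l) \<le> f (l *\<^sub>R x + (1 - l) *\<^sub>R y)"
  by (simp add: log_concave_def)

lemma log_concave_midpoint:
  assumes "log_concave f"
  shows "sqrt (f x * f y) \<le> f ((1/2) *\<^sub>R x + (1/2) *\<^sub>R y)"
  using log_concaveD[OF assms, of "1/2" x y] log_concaveD_nonneg[OF assms]
  by (simp add: powr_half_sqrt real_sqrt_mult)

lemma log_concave_mult:
  assumes f: "log_concave f" and g: "log_concave g"
  shows "log_concave (\<lambda>x. f x * g x)"
  unfolding log_concave_def
proof (intro conjI allI impI)
  note nn = log_concaveD_nonneg[OF f] log_concaveD_nonneg[OF g]
  show "0 \<le> f x * g x" for x
    using nn by simp
  fix x y and l :: real
  assume l: "0 < l \<and> l < 1"
  have "(f x * g x) powr l * (f y * g y) powr (1 - l)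
        = (f x powr l * f y powr (1 - l)) * (g x powr l * g y powr (1 - l))"
    using nn by (simp add: powr_mult)
  also have "\<dots> \<le> f (l *\<^sub>R x + (1 - l) *\<^sub>R y) * g (l *\<^sub>R x + (1 - l) *\<^sub>R y)"
    using l log_concaveD[OF f] log_concaveD[OF g] nn by (intro mult_mono) auto
  finally show "(f x * g x) powr l * (f y * g y) powr (1 - l)
        \<le> f (l *\<^sub>R x + (1 - l) *\<^sub>R y) * g (l *\<^sub>R x + (1 - l) *\<^sub>R y)" .
qed

lemma log_concave_translate:
  assumes "log_concave f"
  shows "log_concave (\<lambda>z. f (z - a))"
  unfolding log_concave_def
proof (intro conjI allI impI)
  show "0 \<le> f (x - a)" for x
    using log_concaveD_nonneg[OF assms] .
  fix x y and l :: real
  assume "0 < l \<and> l < 1"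
  moreover have "l *\<^sub>R x + (1 - l) *\<^sub>R y - a = l *\<^sub>R (x - a) + (1 - l) *\<^sub>R (y - a)"
    by (simp add: algebra_simps)
  ultimately show "f (x - a) powr l * f (y - a) powr (1 - l) \<le> f (l *\<^sub>R x + (1 - l) *\<^sub>R y - a)"
    using log_concaveD[OF assms] by simp
qed

lemma log_concave_convex_superlevel:
  assumes "log_concave f" and "0 \<le> c"
  shows "convex {x. 0 < f x \<and> c \<le> f x}"
proof (rule convexI_strict)
  fix x y and u :: real
  assume x: "x \<in> {x. 0 < f x \<and> c \<le> f x}" and y: "y \<in> {x. 0 < f x \<and> c \<le> f x}"
    and u: "0 < u" "u < 1"
  have "c \<le> f x powr u * f y powr (1 - u)"
  proof (cases "c = 0")
    case False
    then have "c = c powr u * c powr (1 - u)"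
      using \<open>0 \<le> c\<close> by (simp flip: powr_add)
    also have "\<dots> \<le> f x powr u * f y powr (1 - u)"
      using x y u \<open>0 \<le> c\<close> by (intro mult_mono powr_mono2) auto
    finally show ?thesis .
  qed (use x y in simp)
  moreover have "0 < f x powr u * f y powr (1 - u)"
    using x y by simp
  ultimately show "u *\<^sub>R x + (1 - u) *\<^sub>R y \<in> {x. 0 < f x \<and> c \<le> f x}"
    using log_concaveD[OF assms(1) u, of x y] by simp
qed

lemma sets_lebesgue_convex:
  fixes S :: "'a::euclidean_space set"
  assumes "convex S"
  shows "S \<in> sets lebesgue"
proof -
  have "negligible (S - interior S)"
    using negligible_convex_frontier[OF assms]
    by (rule negligible_subset) (auto simp: frontier_def dest: closure_subset[THEN subsetD])
  then have "interior S \<union> (S - interior S) \<in> sets lebesgue"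
    by (intro sets.Un) (simp_all add: borel_open negligible_imp_sets)
  moreover have "S = interior S \<union> (S - interior S)"
    using interior_subset by blast
  ultimately show ?thesis by simp
qed

lemma lmeasurable_if_integrable_ge:
  fixes f :: "'a::euclidean_space \<Rightarrow> real"
  assumes int: "f integrable_on UNIV" and nn: "\<And>x. 0 \<le> f x" and E: "E \<in> sets lebesgue"
    and \<delta>: "0 < \<delta>" and ge: "\<And>x. x \<in> E \<Longrightarrow> \<delta> \<le> f x"
  shows "E \<in> lmeasurable"
proof -
  have "indicat_real E integrable_on UNIV"
  proof (rule measurable_bounded_by_integrable_imp_integrable_real[where g="\<lambda>x. f x / \<delta>"])
    show "indicat_real E \<in> borel_measurable (lebesgue_on UNIV)"
      using E by simp
    show "(\<lambda>x. f x / \<delta>) integrable_on UNIV"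
      using int \<delta> integrable_on_cdivide_iff[of \<delta> f UNIV] by simp
    show "\<bar>indicat_real E x\<bar> \<le> f x / \<delta>" if "x \<in> UNIV" for x
      using ge nn \<delta> by (auto simp: indicator_def field_simps)
  qed simp
  then show ?thesis
    by (simp add: measurable_integrable)
qed

lemma measure_mult_le_integral:
  fixes f :: "'a::euclidean_space \<Rightarrow> real"
  assumes int: "f integrable_on UNIV" and nn: "\<And>x. 0 \<le> f x" and E: "E \<in> lmeasurable"
    and \<delta>: "0 \<le> \<delta>" and ge: "\<And>x. x \<in> E \<Longrightarrow> \<delta> \<le> f x"
  shows "\<delta> * measure lebesgue E \<le> integral UNIV f"
proof (rule has_integral_le)
  show "((\<lambda>x. \<delta> * indicat_real E x) has_integral \<delta> * measure lebesgue E) UNIV"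
    using E by (intro has_integral_mult_right) (simp add: lmeasurable_iff_has_integral)
  show "(f has_integral integral UNIV f) UNIV"
    using int by (simp add: integrable_integral)
  show "\<delta> * indicat_real E x \<le> f x" if "x \<in> UNIV" for x
    using ge nn \<delta> by (auto simp: indicator_def)
qed

lemma fmeasurable_if_measure_pos:
  assumes "0 < measure M A"
  shows "A \<in> fmeasurable M"
proof (rule fmeasurableI)
  show "A \<in> sets M"
    using assms by (metis emeasure_notin_sets enn2real_0 less_irrefl measure_def)
  show "emeasure M A < \<infinity>"
    using assms by (cases "emeasure M A = \<infinity>") (auto simp: measure_def less_top)
qed

lemma superlevel_not_negligible:
  fixes f :: "'a::euclidean_space \<Rightarrow> real"
  assumes "\<not> negligible (supp f)"
  obtains \<delta> where "0 < \<delta>" "\<not> negligible {x. \<delta> \<le> f x}"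
proof -
  have "supp f = (\<Union>k. {x. 1 / real (Suc k) \<le> f x})"
  proof (intro set_eqI iffI)
    fix x
    assume "x \<in> supp f"
    then obtain k where "inverse (real (Suc k)) < f x"
      using reals_Archimedean by (auto simp: supp_def)
    then show "x \<in> (\<Union>k. {x. 1 / real (Suc k) \<le> f x})"
      by (auto simp: inverse_eq_divide intro!: less_imp_le)
  next
    fix x
    assume "x \<in> (\<Union>k. {x. 1 / real (Suc k) \<le> f x})"
    then show "x \<in> supp f"
      by (auto simp: supp_def intro: less_le_trans[of 0 "1 / real (Suc _)"])
  qed
  then obtain k where "\<not> negligible {x. 1 / real (Suc k) \<le> f x}"
    using assms negligible_countable_Union[of "range (\<lambda>k. {x. 1 / real (Suc k) \<le> f x})"] by auto
  then show thesis
    using that[of "1 / real (Suc k)"] by simp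
qed

lemma log_concave_sqrt_le_integral:
  fixes f :: "'a::euclidean_space \<Rightarrow> real"
  assumes lc: "log_concave f" and int: "f integrable_on UNIV"
    and \<delta>: "0 \<le> \<delta>" and E_pos: "0 < measure lebesgue {x. \<delta> \<le> f x}"
  shows "sqrt (f p * \<delta>) * ((1/2) ^ DIM('a) * measure lebesgue {x. \<delta> \<le> f x}) \<le> integral UNIV f"
proof -
  note nn = log_concaveD_nonneg[OF lc]
  define E where "E = {x. \<delta> \<le> f x}"
  define E' where "E' = (\<lambda>y. (1/2::real) *\<^sub>R y + (1/2) *\<^sub>R p) ` E"
  have E'_measure: "measure lebesgue E' = (1/2) ^ DIM('a) * measure lebesgue E"
    unfolding E'_def using measure_lebesgue_affine[of "1/2::real" "(1/2) *\<^sub>R p" E] by simp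
  then have E'_pos: "0 < measure lebesgue E'"
    using E_pos by (simp add: E_def)
  have "sqrt (f p * \<delta>) \<le> f y" if "y \<in> E'" for y
  proof -
    obtain w where w: "w \<in> E" "y = (1/2::real) *\<^sub>R w + (1/2) *\<^sub>R p"
      using \<open>y \<in> E'\<close> by (auto simp: E'_def)
    have "sqrt (f p * \<delta>) \<le> sqrt (f w * f p)"
      using w(1) nn[of p] mult_left_mono[of \<delta> "f w" "f p"] by (simp add: E_def mult.commute)
    also have "\<dots> \<le> f y"
      using log_concave_midpoint[OF lc, of w p] w(2) by simp
    finally show ?thesis .
  qed
  then have "sqrt (f p * \<delta>) * measure lebesgue E' \<le> integral UNIV f"
    using measure_mult_le_integral[OF int nn fmeasurable_if_measure_pos[OF E'_pos]] \<delta> nn[of p]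
    by simp
  then show ?thesis
    by (simp add: E'_measure E_def)
qed

lemma log_concave_integrable_bdd_above:
  fixes f :: "'a::euclidean_space \<Rightarrow> real"
  assumes lc: "log_concave f" and int: "f integrable_on UNIV" and "\<not> negligible (supp f)"
  shows "bdd_above (range f)"
proof -
  obtain \<delta> where \<delta>: "0 < \<delta>" and "\<not> negligible {x. \<delta> \<le> f x}"
    by (rule superlevel_not_negligible[OF assms(3)])
  define E where "E = {x. \<delta> \<le> f x}"
  have "E = {x. 0 < f x \<and> \<delta> \<le> f x}"
    using \<delta> by (auto simp: E_def)
  then have "E \<in> sets lebesgue"
    using sets_lebesgue_convex[OF log_concave_convex_superlevel[OF lc less_imp_le[OF \<delta>]]]
    by (simp only:)
  then have E: "E \<in> lmeasurable"
    by (rule lmeasurable_if_integrable_ge[OF int log_concaveD_nonneg[OF lc] _ \<delta>]) (simp add: E_def)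
  then have E_pos: "0 < measure lebesgue E"
    using \<open>\<not> negligible {x. \<delta> \<le> f x}\<close> negligible_iff_measure0[OF E]
    by (simp add: E_def zero_less_measure_iff)
  define B where "B = integral UNIV f / ((1/2) ^ DIM('a) * measure lebesgue E)"
  have "f p \<le> B\<^sup>2 / \<delta>" for p
  proof -
    have "sqrt (f p * \<delta>) \<le> B"
      using log_concave_sqrt_le_integral[OF lc int less_imp_le[OF \<delta>]] E_pos
      by (simp add: B_def E_def field_simps)
    then have "f p * \<delta> \<le> B\<^sup>2"
      by (rule sqrt_le_D)
    then show ?thesis
      using \<delta> by (simp add: field_simps)
  qed
  then show ?thesis
    by (intro bdd_aboveI2)
qed

lemma At_iff:
  "z \<in> At t f x \<longleftrightarrow> 0 < f z \<and> 0 < f (z - x) \<and> t * (sup_norm f)\<^sup>2 \<le> f z * f (z - x)"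
proof -
  have "z \<in> (\<lambda>y. x + y) ` supp f \<longleftrightarrow> z - x \<in> supp f"
    by (auto simp: image_iff intro!: bexI[of _ "z - x"])
  then show ?thesis
    by (auto simp: At_def supp_def)
qed

lemma At_eq_superlevel:
  assumes "log_concave f"
  shows "At t f x = {z. 0 < f z * f (z - x) \<and> t * (sup_norm f)\<^sup>2 \<le> f z * f (z - x)}"
proof -
  have "0 < f z * f (z - x) \<longleftrightarrow> 0 < f z \<and> 0 < f (z - x)" for z
    using log_concaveD_nonneg[OF assms, of z] log_concaveD_nonneg[OF assms, of "z - x"]
    by (auto simp: zero_less_mult_iff)
  then show ?thesis
    by (intro set_eqI) (simp add: At_iff conj_assoc)
qed

lemma convex_At:
  assumes "log_concave f" and "0 \<le> t"
  shows "convex (At t f x)"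
  unfolding At_eq_superlevel[OF assms(1)]
  using assms by (intro log_concave_convex_superlevel log_concave_mult log_concave_translate) auto

lemma diff_set_if_At_nonempty:
  assumes "At t f x \<noteq> {}"
  shows "x \<in> diff_set (supp f) (supp f)"
proof -
  obtain z where "z \<in> At t f x"
    using assms by blast
  then show ?thesis
    unfolding diff_set_def supp_def At_iff by (intro CollectI exI[of _ z] exI[of _ "z - x"]) auto
qed

lemma At_subset_translate_At_zero:
  assumes lc: "log_concave f"
  shows "At t f x \<subseteq> (+) ((1/2) *\<^sub>R x) ` At t f 0"
proof
  fix z
  assume z: "z \<in> At t f x"
  define m where "m = z - (1/2) *\<^sub>R x"
  have "m = (1/2) *\<^sub>R z + (1/2) *\<^sub>R (z - x)"
    by (simp add: m_def algebra_simps flip: scaleR_add_left)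
  then have m_ge: "sqrt (f z * f (z - x)) \<le> f m"
    using log_concave_midpoint[OF lc, of z "z - x"] by simp
  have pos: "0 < f z" "0 < f (z - x)"
    using z by (auto simp: At_iff)
  then have "0 < f m"
    using m_ge by (smt (verit) mult_pos_pos real_sqrt_gt_zero)
  moreover have "f z * f (z - x) \<le> (f m)\<^sup>2"
    using m_ge by (rule sqrt_le_D)
  ultimately have "m \<in> At t f 0"
    using z by (auto simp: At_iff power2_eq_square)
  moreover have "z = (1/2) *\<^sub>R x + m"
    by (simp add: m_def)
  ultimately show "z \<in> (+) ((1/2) *\<^sub>R x) ` At t f 0"
    by blast
qed

lemma At_zero_inter_translate_subset:
  assumes "0 \<le> t"
  shows "At t f 0 \<inter> (+) x ` At t f 0 \<subseteq> At t f x"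
proof
  fix w
  assume "w \<in> At t f 0 \<inter> (+) x ` At t f 0"
  then obtain u where w: "w \<in> At t f 0" and u: "u \<in> At t f 0" and "w - x = u"
    by force
  define c where "c = t * (sup_norm f)\<^sup>2"
  have "0 \<le> c"
    using assms by (simp add: c_def)
  have "c \<le> f w * f w" "0 < f w"
    using w by (simp_all add: At_iff c_def)
  moreover have "c \<le> f u * f u" "0 < f u"
    using u by (simp_all add: At_iff c_def)
  ultimately have "c * c \<le> (f w * f u) * (f w * f u)"
    using \<open>0 \<le> c\<close> mult_mono[of c "f w * f w" c "f u * f u"] by (simp add: mult_ac)
  then have "c \<le> f w * f u"
    using \<open>0 < f w\<close> \<open>0 < f u\<close> by (intro power2_le_imp_le[of c]) (simp_all add: power2_eq_square)
  then show "w \<in> At t f x"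
    using \<open>w - x = u\<close> \<open>0 < f w\<close> \<open>0 < f u\<close> by (simp add: At_iff c_def)
qed

lemma At_subset_At_sq_inter_translate:
  assumes le_S: "\<And>z. f z \<le> sup_norm f" and S_pos: "0 < sup_norm f" and "0 \<le> t"
  shows "At t f x \<subseteq> At (t\<^sup>2) f 0 \<inter> (+) x ` At (t\<^sup>2) f 0"
proof -
  let ?S = "sup_norm f"
  have ge: "t * ?S \<le> f z" "t * ?S \<le> f (z - x)" if z: "z \<in> At t f x" for z
  proof -
    have pos: "0 < f z" "0 < f (z - x)" and prod: "t * ?S\<^sup>2 \<le> f z * f (z - x)"
      using z by (auto simp: At_iff)
    have "(t * ?S) * ?S \<le> f z * f (z - x)"
      using prod by (simp add: power2_eq_square mult.assoc)
    also have "\<dots> \<le> f z * ?S"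
      using pos le_S[of "z - x"] by (intro mult_left_mono) auto
    finally show "t * ?S \<le> f z"
      using S_pos by simp
    have "(t * ?S) * ?S \<le> f z * f (z - x)"
      using prod by (simp add: power2_eq_square mult.assoc)
    also have "\<dots> \<le> ?S * f (z - x)"
      using pos le_S[of z] by (intro mult_right_mono) auto
    finally have "(t * ?S) * ?S \<le> f (z - x) * ?S"
      by (simp add: mult.commute)
    then show "t * ?S \<le> f (z - x)"
      using S_pos by simp
  qed
  have sq: "t\<^sup>2 * ?S\<^sup>2 \<le> f y * f y" if "t * ?S \<le> f y" for y
    using that mult_mono[OF that that] \<open>0 \<le> t\<close> S_pos
    by (simp add: power2_eq_square mult_ac)
  show ?thesis
  proof
    fix z
    assume z: "z \<in> At t f x"
    then have "z \<in> At (t\<^sup>2) f 0" "z - x \<in> At (t\<^sup>2) f 0"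
      using sq[OF ge(1)[OF z]] sq[OF ge(2)[OF z]] by (auto simp: At_iff)
    moreover have "z = x + (z - x)"
      by simp
    ultimately show "z \<in> At (t\<^sup>2) f 0 \<inter> (+) x ` At (t\<^sup>2) f 0"
      by blast
  qed
qed

lemma minkowski_sum_uminus: "minkowski_sum K (uminus ` K) = diff_set K K"
  unfolding minkowski_sum_def diff_set_def by (force simp: image_iff)

lemma lmeasurable_inter_translate:
  fixes K :: "'a::euclidean_space set"
  assumes "K \<in> lmeasurable"
  shows "K \<inter> (+) z ` K \<in> lmeasurable"
  using assms lebesgue_sets_translation[of K z] by (intro fmeasurable_Int_fmeasurable) auto

lemma Sup_measure_inter_translate:
  fixes K :: "'a::euclidean_space set"
  assumes K: "K \<in> lmeasurable"
  shows "(SUP z. measure lebesgue (K \<inter> (+) z ` K)) = measure lebesgue K"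
proof (rule antisym)
  have le: "measure lebesgue (K \<inter> (+) z ` K) \<le> measure lebesgue K" for z
    using lmeasurable_inter_translate[OF K] K by (intro measure_mono_fmeasurable) auto
  then show "(SUP z. measure lebesgue (K \<inter> (+) z ` K)) \<le> measure lebesgue K"
    by (intro cSUP_least) auto
  have "measure lebesgue K = measure lebesgue (K \<inter> (+) 0 ` K)"
    by simp
  also have "\<dots> \<le> (SUP z. measure lebesgue (K \<inter> (+) z ` K))"
    using le by (intro cSUP_upper bdd_aboveI2) auto
  finally show "measure lebesgue K \<le> (SUP z. measure lebesgue (K \<inter> (+) z ` K))" .
qed

lemma conv_body_uminus:
  fixes K :: "'a::euclidean_space set"
  assumes "K \<in> lmeasurable"
  shows "conv_body K \<theta> (uminus ` K) =
    {x \<in> diff_set K K. \<theta> * measure lebesgue K \<le> measure lebesgue (K \<inter> (+) x ` K)}"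
proof -
  have "(\<lambda>y. x - y) ` uminus ` K = (+) x ` K" for x
    by (simp add: image_image)
  then show ?thesis
    using Sup_measure_inter_translate[OF assms] by (simp add: conv_body_def minkowski_sum_uminus)
qed

context
  fixes f :: "'a::euclidean_space \<Rightarrow> real"
  assumes lc: "log_concave f" and int: "f integrable_on UNIV" and supp: "\<not> negligible (supp f)"
begin

lemma le_sup_norm: "f x \<le> sup_norm f"
  unfolding sup_norm_def by (rule cSUP_upper[OF UNIV_I log_concave_integrable_bdd_above[OF lc int supp]])

lemma sup_norm_pos: "0 < sup_norm f"
proof -
  obtain p where "p \<in> supp f"
    using supp by force
  then show ?thesis
    using le_sup_norm[of p] by (simp add: supp_def)
qed

lemma lmeasurable_At_zero:
  assumes "0 < t"
  shows "At t f 0 \<in> lmeasurable"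
proof (rule lmeasurable_if_integrable_ge[OF int log_concaveD_nonneg[OF lc]])
  show "At t f 0 \<in> sets lebesgue"
    using assms by (intro sets_lebesgue_convex convex_At lc) simp
  show "0 < sqrt t * sup_norm f"
    using assms sup_norm_pos by simp
  fix z
  assume "z \<in> At t f 0"
  then have "t * (sup_norm f)\<^sup>2 \<le> f z * f z" "0 < f z"
    by (simp_all add: At_iff)
  have "sqrt t * sup_norm f = sqrt (t * (sup_norm f)\<^sup>2)"
    using sup_norm_pos by (simp add: real_sqrt_mult)
  also have "\<dots> \<le> sqrt (f z * f z)"
    using \<open>t * (sup_norm f)\<^sup>2 \<le> f z * f z\<close> by (rule real_sqrt_le_mono)
  also have "\<dots> = f z"
    using \<open>0 < f z\<close> by simp
  finally show "sqrt t * sup_norm f \<le> f z" .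
qed

lemma lmeasurable_At:
  assumes "0 < t"
  shows "At t f x \<in> lmeasurable"
proof (rule fmeasurableI2[OF measurable_translation[OF lmeasurable_At_zero[OF assms]]])
  show "At t f x \<subseteq> (+) ((1/2) *\<^sub>R x) ` At t f 0"
    by (rule At_subset_translate_At_zero[OF lc])
  show "At t f x \<in> sets lebesgue"
    using assms by (intro sets_lebesgue_convex convex_At lc) simp
qed

lemma measure_At_le_measure_At_zero:
  assumes "0 < t"
  shows "measure lebesgue (At t f x) \<le> measure lebesgue (At t f 0)"
proof -
  have "measure lebesgue (At t f x) \<le> measure lebesgue ((+) ((1/2) *\<^sub>R x) ` At t f 0)"
    using assms lmeasurable_At measurable_translation[OF lmeasurable_At_zero]
    by (intro measure_mono_fmeasurable At_subset_translate_At_zero lc) auto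
  then show ?thesis
    by (simp add: measure_translation)
qed

lemma Mt_eq_measure_At_zero:
  assumes "0 < t"
  shows "Mt t f = measure lebesgue (At t f 0)"
proof -
  obtain p where "p \<in> supp f"
    using supp by force
  then have "0 \<in> diff_set (supp f) (supp f)"
    by (force simp: diff_set_def)
  then show ?thesis
    unfolding Mt_def using measure_At_le_measure_At_zero[OF assms]
    by (intro antisym cSUP_least) (auto intro!: cSUP_upper2 bdd_aboveI2)
qed

lemma conv_body_At_zero_subset_Ct:
  assumes t: "0 < t"
  shows "conv_body (At t f 0) \<theta> (uminus ` At t f 0) \<subseteq> Ct \<theta> t f"
proof
  let ?K = "At t f 0"
  fix x
  assume "x \<in> conv_body ?K \<theta> (uminus ` ?K)"
  then have x: "x \<in> diff_set ?K ?K" and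
    ge: "\<theta> * measure lebesgue ?K \<le> measure lebesgue (?K \<inter> (+) x ` ?K)"
    by (simp_all add: conv_body_uminus[OF lmeasurable_At_zero[OF t]])
  have sub: "?K \<inter> (+) x ` ?K \<subseteq> At t f x"
    using t by (intro At_zero_inter_translate_subset) simp
  obtain a b where "a \<in> ?K" "b \<in> ?K" "x = a - b"
    using x by (auto simp: diff_set_def)
  then have "a \<in> ?K \<inter> (+) x ` ?K"
    by force
  then have "At t f x \<noteq> {}"
    using sub by blast
  moreover have "measure lebesgue (?K \<inter> (+) x ` ?K) \<le> measure lebesgue (At t f x)"
    using sub lmeasurable_inter_translate[OF lmeasurable_At_zero[OF t]] lmeasurable_At[OF t]
    by (intro measure_mono_fmeasurable) auto
  ultimately show "x \<in> Ct \<theta> t f"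
    using ge diff_set_if_At_nonempty by (auto simp: Ct_def Mt_eq_measure_At_zero[OF t])
qed

lemma Ct_subset_conv_body_At_sq_zero:
  assumes t: "0 < t"
  shows "Ct \<theta> t f \<subseteq> conv_body (At (t\<^sup>2) f 0) (Mt t f / Mt (t\<^sup>2) f * \<theta>) (uminus ` At (t\<^sup>2) f 0)"
proof
  let ?K = "At (t\<^sup>2) f 0"
  have t2: "0 < t\<^sup>2"
    using t by simp
  fix x
  assume "x \<in> Ct \<theta> t f"
  then obtain z where z: "z \<in> At t f x" and ge: "\<theta> * Mt t f \<le> measure lebesgue (At t f x)"
    by (auto simp: Ct_def)
  have sub: "At t f x \<subseteq> ?K \<inter> (+) x ` ?K"
    using t by (intro At_subset_At_sq_inter_translate le_sup_norm sup_norm_pos) simp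
  then have "z \<in> ?K" "z - x \<in> ?K"
    using z by auto
  then have "x \<in> diff_set ?K ?K"
    by (force simp: diff_set_def)
  moreover have "measure lebesgue (At t f x) \<le> measure lebesgue (?K \<inter> (+) x ` ?K)"
    using sub lmeasurable_inter_translate[OF lmeasurable_At_zero[OF t2]] lmeasurable_At[OF t]
    by (intro measure_mono_fmeasurable) auto
  \<comment> \<open>the second case is \<open>|K| = 0\<close>, where the ratio is a division by zero\<close>
  moreover have "Mt t f / Mt (t\<^sup>2) f * \<theta> * measure lebesgue ?K = \<theta> * Mt t f \<or>
      Mt t f / Mt (t\<^sup>2) f * \<theta> * measure lebesgue ?K = 0"
    by (auto simp: Mt_eq_measure_At_zero[OF t2])
  ultimately show "x \<in> conv_body ?K (Mt t f / Mt (t\<^sup>2) f * \<theta>) (uminus ` ?K)"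
    using ge by (auto simp: conv_body_uminus[OF lmeasurable_At_zero[OF t2]])
qed

end

theorem lemma3p7:
  fixes f :: "'a::euclidean_space \<Rightarrow> real" and \<theta> t :: real
  assumes "log_concave f"
    and "f integrable_on UNIV"
    and "interior (supp f) \<noteq> {}"
    and "0 \<le> \<theta>" "\<theta> \<le> 1"
    and "0 < t" "t \<le> 1"
  shows "conv_body (At t f 0) \<theta> (uminus ` At t f 0) \<subseteq> Ct \<theta> t f \<and>
         Ct \<theta> t f \<subseteq> conv_body (At (t\<^sup>2) f 0) (Mt t f / Mt (t\<^sup>2) f * \<theta>) (uminus ` At (t\<^sup>2) f 0)"
proof -
  have "\<not> negligible (supp f)"
    using assms(3) interior_subset negligible_subset open_not_negligible by blast
  then show ?thesis
    using conv_body_At_zero_subset_Ct Ct_subset_conv_body_At_sq_zero assms(1,2,6) by blast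
qed

end
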